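(* Let $f_A(x)=1-\dfrac{1}{\sum_{n\ge0}n!\,x^n}$ and $f_B(x)=\dfrac{\sum_{n\ge0}2^nn!\,x^n}{\sum_{n\ge0}n!\,x^n}$. Then $f_B(x)=\sum_{n\ge0}|\mathfrak B_n^{(0)}|x^n$, and for all $n,k\ge0$, $|\mathfrak B_n^{(k)}|$ equals the coefficient of $x^nt^k$ in $\dfrac{f_B(x)}{1-t\,f_A(x)}$.
   Context: $\mathfrak B_n$ is the group of signed permutations of $\{\pm1,\dots,\pm n\}$ ($w(-i)=-w(i)$), a Coxeter group with generators $\tau_0=(-1,1)$ and $\tau_i=(i,i+1)(-i,-i-1)$ for $1\le i\le n-1$ ($\mathfrak B_0$ is trivial). For $w\in\mathfrak B_n$, $C(w)$ is the set of generators not appearing in a (any) reduced expression of $w$; equivalently, with $w(0)=0$, $C(w)=\{\tau_i: |w(j)|<w(k)\ \forall\,0\le j\le i<k\le n\}$. $\mathfrak B_n^{(k)}=\{w\in\mathfrak B_n:|C(w)|=k\}$. *)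

theory Defs
  imports "HOL-Computational_Algebra.Formal_Power_Series"
begin

text \<open>Signed permutations of {+-1,...,+-n}, represented as functions int => int that
  are bijections of {i. 1 <= |i| <= n}, odd (w(-i) = -w i, hence w 0 = 0), and the
  identity outside {-n..n}.\<close>
definition signed_perms :: "nat \<Rightarrow> (int \<Rightarrow> int) set" where
  "signed_perms n = {w. bij_betw w {i. 1 \<le> \<bar>i\<bar> \<and> \<bar>i\<bar> \<le> int n} {i. 1 \<le> \<bar>i\<bar> \<and> \<bar>i\<bar> \<le> int n}
      \<and> (\<forall>i. w (- i) = - w i)
      \<and> (\<forall>i. \<bar>i\<bar> > int n \<longrightarrow> w i = i)}"

text \<open>C(w): indices i (standing for generator tau_i, 0 <= i <= n-1) such that
  |w j| < w k for all 0 <= j <= i < k <= n.\<close>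
definition Cset :: "nat \<Rightarrow> (int \<Rightarrow> int) \<Rightarrow> int set" where
  "Cset n w = {i. 0 \<le> i \<and> i < int n \<and>
      (\<forall>j k. 0 \<le> j \<and> j \<le> i \<and> i < k \<and> k \<le> int n \<longrightarrow> \<bar>w j\<bar> < w k)}"

definition Bnk :: "nat \<Rightarrow> nat \<Rightarrow> (int \<Rightarrow> int) set" where
  "Bnk n k = {w \<in> signed_perms n. card (Cset n w) = k}"

definition fA :: "rat fps" where
  "fA = 1 - inverse (Abs_fps (\<lambda>n. fact n))"

definition fB :: "rat fps" where
  "fB = Abs_fps (\<lambda>n. 2 ^ n * fact n) * inverse (Abs_fps (\<lambda>n. fact n))"

text \<open>Bivariate series: outer variable t, coefficients are series in x.\<close>
definition GF :: "rat fps fps" where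
  "GF = fps_const fB * inverse (1 - fps_X * fps_const fA)"

end

theory Submission
  imports Defs "HOL-Combinatorics.Permutations"
begin

(* Cutting a signed permutation w at the largest index i of C(w) writes it uniquely as a
   signed permutation u of [+-i] followed by an indecomposable permutation v of [n - i]
   shifted up by i; then C(w) is C(u) together with tau_i.  Writing I(x) for the generating
   function of indecomposable permutations and B_k(x) = sum_n |B_n^(k)| x^n, this gives
   B_(k+1) = B_k I.  The same cut applied to all of B_n, and to the unsigned permutations in it,
   gives  sum 2^n n! x^n = B_0 + (sum 2^n n! x^n) I  and  sum n! x^n = 1 + (sum n! x^n) I.
   Hence I = f_A, B_0 = f_B, and B_k = f_B f_A^k is the coefficient of t^k in f_B / (1 - t f_A). *)

section \<open>Signed permutations\<close>

lemma odd_fun_abs_arg: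
  fixes w :: "int \<Rightarrow> int"
  assumes "\<And>i. w (- i) = - w i"
  shows "\<bar>w \<bar>x\<bar>\<bar> = \<bar>w x\<bar>"
  using assms[of x] by (cases "x \<ge> 0") auto

lemma odd_fun_sgn_abs_arg:
  fixes w :: "int \<Rightarrow> int"
  assumes "\<And>i. w (- i) = - w i"
  shows "sgn x * w \<bar>x\<bar> = w x"
  using assms[of x] assms[of 0] by (cases x "0::int" rule: linorder_cases) auto

definition signed_interval :: "nat \<Rightarrow> int set" where
  "signed_interval n = {i. 1 \<le> \<bar>i\<bar> \<and> \<bar>i\<bar> \<le> int n}"

lemma odd_fun_maps_signed_interval_iff:
  fixes w :: "int \<Rightarrow> int"
  assumes odd: "\<And>i. w (- i) = - w i"
  shows "w ` signed_interval n \<subseteq> signed_interval n \<longleftrightarrow> (\<forall>x\<in>{1..int n}. \<bar>w x\<bar> \<in> {1..int n})"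
proof -
  have mem: "x \<in> signed_interval n \<longleftrightarrow> \<bar>x\<bar> \<in> {1..int n}" for x
    by (simp add: signed_interval_def)
  have "w ` signed_interval n \<subseteq> signed_interval n \<longleftrightarrow>
      (\<forall>x. \<bar>x\<bar> \<in> {1..int n} \<longrightarrow> \<bar>w \<bar>x\<bar>\<bar> \<in> {1..int n})"
    by (auto simp: image_subset_iff mem odd_fun_abs_arg[of w, OF odd])
  also have "\<dots> \<longleftrightarrow> (\<forall>x\<in>{1..int n}. \<bar>w x\<bar> \<in> {1..int n})"
    by (metis abs_of_pos atLeastAtMost_iff zero_less_one_class.zero_less_one order_less_le_trans)
  finally show ?thesis .
qed

lemma odd_fun_inj_on_signed_interval_iff:
  fixes w :: "int \<Rightarrow> int"
  assumes odd: "\<And>i. w (- i) = - w i" and maps: "\<forall>x\<in>{1..int n}. \<bar>w x\<bar> \<in> {1..int n}"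
  shows "inj_on w (signed_interval n) \<longleftrightarrow> inj_on (\<lambda>x. \<bar>w x\<bar>) {1..int n}"
proof
  assume inj: "inj_on w (signed_interval n)"
  show "inj_on (\<lambda>x. \<bar>w x\<bar>) {1..int n}"
  proof (rule inj_onI)
    fix x y assume xy: "x \<in> {1..int n}" "y \<in> {1..int n}" and "\<bar>w x\<bar> = \<bar>w y\<bar>"
    then have "w x = w y \<or> w x = w (- y)" using odd[of y] by auto
    moreover have "x \<in> signed_interval n" "y \<in> signed_interval n" "- y \<in> signed_interval n"
      using xy by (auto simp: signed_interval_def)
    ultimately have "x = y \<or> x = - y" using inj by (auto dest: inj_onD)
    then show "x = y" using xy by auto
  qed
next
  assume inj: "inj_on (\<lambda>x. \<bar>w x\<bar>) {1..int n}"
  show "inj_on w (signed_interval n)"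
  proof (rule inj_onI)
    fix x y assume xy: "x \<in> signed_interval n" "y \<in> signed_interval n" and e: "w x = w y"
    then have abs_xy: "\<bar>x\<bar> \<in> {1..int n}" "\<bar>y\<bar> \<in> {1..int n}" by (auto simp: signed_interval_def)
    have "\<bar>w \<bar>x\<bar>\<bar> = \<bar>w \<bar>y\<bar>\<bar>" using e odd_fun_abs_arg[of w, OF odd] by metis
    then have "\<bar>x\<bar> = \<bar>y\<bar>" by (rule inj_onD[OF inj]) (use abs_xy in auto)
    moreover have "\<bar>w \<bar>x\<bar>\<bar> \<in> {1..int n}" using maps abs_xy(1) by blast
    then have "w x \<noteq> 0" using odd_fun_abs_arg[of w x, OF odd] by auto
    ultimately show "x = y" using e odd[of y] by (cases "x \<ge> 0"; cases "y \<ge> 0") auto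
  qed
qed

lemma signed_perms_iff:
  "w \<in> signed_perms n \<longleftrightarrow>
     (\<forall>i. w (- i) = - w i) \<and> (\<forall>i. int n < \<bar>i\<bar> \<longrightarrow> w i = i) \<and>
     (\<forall>x\<in>{1..int n}. \<bar>w x\<bar> \<in> {1..int n}) \<and> inj_on (\<lambda>x. \<bar>w x\<bar>) {1..int n}"
proof -
  have "finite (signed_interval n)"
    by (rule finite_subset[of _ "{- int n..int n}"]) (auto simp: signed_interval_def)
  then have "bij_betw w (signed_interval n) (signed_interval n) \<longleftrightarrow>
      w ` signed_interval n \<subseteq> signed_interval n \<and> inj_on w (signed_interval n)"
    using endo_inj_surj by (auto simp: bij_betw_def)
  then show ?thesis
    using odd_fun_maps_signed_interval_iff[of w n] odd_fun_inj_on_signed_interval_iff[of w n]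
    unfolding signed_perms_def signed_interval_def[symmetric] by blast
qed

lemma
  assumes "w \<in> signed_perms n"
  shows signed_perm_odd: "w (- i) = - w i"
    and signed_perm_fixes: "int n < \<bar>i\<bar> \<Longrightarrow> w i = i"
    and signed_perm_abs_mem: "x \<in> {1..int n} \<Longrightarrow> \<bar>w x\<bar> \<in> {1..int n}"
    and signed_perm_abs_inj: "inj_on (\<lambda>x. \<bar>w x\<bar>) {1..int n}"
  using assms unfolding signed_perms_iff by blast+

lemma signed_perm_zero: "w \<in> signed_perms n \<Longrightarrow> w 0 = 0"
  using signed_perm_odd[of w n 0] by simp

lemma signed_perm_abs_le: "w \<in> signed_perms n \<Longrightarrow> \<bar>x\<bar> \<le> int n \<Longrightarrow> \<bar>w x\<bar> \<le> int n"
  using signed_perm_abs_mem[of w n "\<bar>x\<bar>"] odd_fun_abs_arg[of w x] signed_perm_odd[of w n]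
    signed_perm_zero[of w n] by (cases "x = 0") auto

lemma signed_perm_abs_inj_nonneg:
  assumes w: "w \<in> signed_perms n"
  shows "inj_on (\<lambda>x. \<bar>w x\<bar>) {0..int n}"
proof -
  have "\<bar>w x\<bar> \<noteq> 0" if "x \<in> {1..int n}" for x using signed_perm_abs_mem[OF w that] by auto
  then have "(\<lambda>x. \<bar>w x\<bar>) 0 \<notin> (\<lambda>x. \<bar>w x\<bar>) ` {1..int n}" using signed_perm_zero[OF w] by auto
  moreover have "{0..int n} = insert 0 {1..int n}" by auto
  ultimately show ?thesis using signed_perm_abs_inj[OF w] by simp
qed

definition positive_signed_perms :: "nat \<Rightarrow> (int \<Rightarrow> int) set" where
  "positive_signed_perms n = {w \<in> signed_perms n. \<forall>x>0. 0 < w x}"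

lemma positive_signed_perm_mem:
  assumes "v \<in> positive_signed_perms m" "x \<in> {1..int m}"
  shows "v x \<in> {1..int m}"
proof -
  have v: "v \<in> signed_perms m" and "0 < v x" using assms by (auto simp: positive_signed_perms_def)
  then have "\<bar>v x\<bar> = v x" by simp
  then show ?thesis using signed_perm_abs_mem[OF v assms(2)] by simp
qed

lemma positive_signed_perm_inj:
  assumes v: "v \<in> positive_signed_perms m"
  shows "inj_on v {1..int m}"
proof -
  have vs: "v \<in> signed_perms m" and pos: "\<And>x. 0 < x \<Longrightarrow> 0 < v x"
    using v by (auto simp: positive_signed_perms_def)
  have "inj_on (\<lambda>x. \<bar>v x\<bar>) {1..int m} \<longleftrightarrow> inj_on v {1..int m}"
    by (rule inj_on_cong) (use pos in \<open>simp add: less_imp_le\<close>)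
  then show ?thesis using signed_perm_abs_inj[OF vs] by simp
qed

(* w maps {c<..n} onto itself, so |w j| cannot lie there when 0 \<le> j \<le> c. *)
lemma signed_perm_abs_le_of_tail:
  assumes w: "w \<in> signed_perms n" and c: "0 \<le> c" "c < int n"
    and tail: "\<And>k. c < k \<Longrightarrow> k \<le> int n \<Longrightarrow> c < w k" and j: "0 \<le> j" "j \<le> c"
  shows "\<bar>w j\<bar> \<le> c"
proof (rule ccontr)
  assume big: "\<not> \<bar>w j\<bar> \<le> c"
  let ?K = "{c<..int n}"
  have "w k \<in> ?K" if "k \<in> ?K" for k
    using tail[of k] signed_perm_abs_le[OF w, of k] c that by auto
  then have "w ` ?K \<subseteq> ?K" by blast
  moreover have "inj_on w ?K"
  proof -
    have "inj_on (\<lambda>k. \<bar>w k\<bar>) ?K"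
      by (rule inj_on_subset[OF signed_perm_abs_inj_nonneg[OF w]]) (use c in auto)
    moreover have "inj_on (\<lambda>k. \<bar>w k\<bar>) ?K \<longleftrightarrow> inj_on w ?K"
    proof (rule inj_on_cong)
      fix k assume "k \<in> ?K"
      then have "c < w k" using tail by auto
      then show "\<bar>w k\<bar> = w k" using c by simp
    qed
    ultimately show ?thesis by simp
  qed
  ultimately have "w ` ?K = ?K" using endo_inj_surj[of ?K w] by simp
  moreover have "\<bar>w j\<bar> \<in> ?K" using big signed_perm_abs_le[OF w, of j] j c by auto
  ultimately have "\<bar>w j\<bar> \<in> w ` ?K" by simp
  then obtain k where k: "k \<in> ?K" "w k = \<bar>w j\<bar>" by force
  then have "\<bar>w k\<bar> = \<bar>w j\<bar>" by simp
  then have "k = j"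
    by (rule inj_onD[OF signed_perm_abs_inj_nonneg[OF w]]) (use k j c in auto)
  then show False using k j by auto
qed

lemma Cset_iff:
  assumes w: "w \<in> signed_perms n"
  shows "c \<in> Cset n w \<longleftrightarrow> 0 \<le> c \<and> c < int n \<and> (\<forall>k. c < k \<and> k \<le> int n \<longrightarrow> c < w k)"
proof
  assume "c \<in> Cset n w"
  then have c: "0 \<le> c" "c < int n"
    and below: "\<And>j k. 0 \<le> j \<Longrightarrow> j \<le> c \<Longrightarrow> c < k \<Longrightarrow> k \<le> int n \<Longrightarrow> \<bar>w j\<bar> < w k"
    by (auto simp: Cset_def)
  have "c < w k" if k: "c < k" "k \<le> int n" for k
  proof -
    have "(\<lambda>j. \<bar>w j\<bar>) ` {0..c} \<subseteq> {0..<w k}" using below k by auto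
    moreover have "inj_on (\<lambda>j. \<bar>w j\<bar>) {0..c}"
      by (rule inj_on_subset[OF signed_perm_abs_inj_nonneg[OF w]]) (use c in auto)
    ultimately have "card {0..c} \<le> card {0..<w k}" by (intro card_inj_on_le) auto
    then show ?thesis using c by simp
  qed
  with c show "0 \<le> c \<and> c < int n \<and> (\<forall>k. c < k \<and> k \<le> int n \<longrightarrow> c < w k)" by blast
next
  assume "0 \<le> c \<and> c < int n \<and> (\<forall>k. c < k \<and> k \<le> int n \<longrightarrow> c < w k)"
  then have c: "0 \<le> c" "c < int n" and tail: "\<And>k. c < k \<Longrightarrow> k \<le> int n \<Longrightarrow> c < w k"
    by auto
  have "\<bar>w j\<bar> < w k" if "0 \<le> j" "j \<le> c" "c < k" "k \<le> int n" for j k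
    using signed_perm_abs_le_of_tail[OF w c tail, of j] tail[of k] that by fastforce
  then show "c \<in> Cset n w" using c by (simp add: Cset_def)
qed

lemma finite_Cset: "finite (Cset n w)"
  by (rule finite_subset[of _ "{0..<int n}"]) (auto simp: Cset_def)

lemma zero_in_Cset_iff:
  assumes w: "w \<in> signed_perms m"
  shows "0 \<in> Cset m w \<longleftrightarrow> 0 < m \<and> w \<in> positive_signed_perms m"
proof -
  have "(\<forall>k. 0 < k \<and> k \<le> int m \<longrightarrow> 0 < w k) \<longleftrightarrow> (\<forall>k>0. 0 < w k)"
  proof (intro iffI allI impI)
    fix k :: int assume "\<forall>k. 0 < k \<and> k \<le> int m \<longrightarrow> 0 < w k" "0 < k"
    then show "0 < w k" using signed_perm_fixes[OF w, of k] by (cases "k \<le> int m") auto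
  qed auto
  then show ?thesis using w by (auto simp: Cset_iff[OF w] positive_signed_perms_def)
qed

(* C(v) = {tau_0} says that v has no negative values and no cut tau_i with i \<ge> 1,
   i.e. v is an indecomposable permutation of {1..m}. *)
definition indecomposable_perms :: "nat \<Rightarrow> (int \<Rightarrow> int) set" where
  "indecomposable_perms m = {v \<in> signed_perms m. Cset m v = {0}}"

lemma indecomposable_perm_positive:
  "v \<in> indecomposable_perms m \<Longrightarrow> v \<in> positive_signed_perms m \<and> 0 < m"
  using zero_in_Cset_iff[of v m] by (auto simp: indecomposable_perms_def)

lemma indecomposable_perms_0: "indecomposable_perms 0 = {}"
  using indecomposable_perm_positive by blast

section \<open>Counting signed permutations\<close>

definition signed_perm_of :: "(int \<Rightarrow> int) \<Rightarrow> int set \<Rightarrow> int \<Rightarrow> int" where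
  "signed_perm_of p S x = sgn x * (if \<bar>x\<bar> \<in> S then - p \<bar>x\<bar> else p \<bar>x\<bar>)"

definition unsigned_part :: "nat \<Rightarrow> (int \<Rightarrow> int) \<Rightarrow> int \<Rightarrow> int" where
  "unsigned_part n w a = (if a \<in> {1..int n} then \<bar>w a\<bar> else a)"

definition negatives :: "nat \<Rightarrow> (int \<Rightarrow> int) \<Rightarrow> int set" where
  "negatives n w = {a \<in> {1..int n}. w a < 0}"

lemma permutes_interval_pos:
  assumes "p permutes {1..int n}" "0 < x"
  shows "0 < p x"
  using permutes_in_image[OF assms(1), of x] permutes_not_in[OF assms(1), of x] assms(2)
  by (cases "x \<in> {1..int n}") auto

lemma signed_perm_of_abs:
  assumes "p permutes {1..int n}" "0 < x"
  shows "\<bar>signed_perm_of p S x\<bar> = p x"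
  using permutes_interval_pos[OF assms] assms(2) by (simp add: signed_perm_of_def)

lemma signed_perm_of_mem:
  assumes p: "p permutes {1..int n}" and S: "S \<subseteq> {1..int n}"
  shows "signed_perm_of p S \<in> signed_perms n"
  unfolding signed_perms_iff
proof (intro conjI allI impI ballI)
  fix x
  show "signed_perm_of p S (- x) = - signed_perm_of p S x"
    by (simp add: signed_perm_of_def)
  show "int n < \<bar>x\<bar> \<Longrightarrow> signed_perm_of p S x = x"
    using permutes_not_in[OF p, of "\<bar>x\<bar>"] S by (auto simp: signed_perm_of_def sgn_mult_abs)
  show "x \<in> {1..int n} \<Longrightarrow> \<bar>signed_perm_of p S x\<bar> \<in> {1..int n}"
    using permutes_in_image[OF p] signed_perm_of_abs[OF p] by simp
  have "inj_on p {1..int n} \<longleftrightarrow> inj_on (\<lambda>x. \<bar>signed_perm_of p S x\<bar>) {1..int n}"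
    by (rule inj_on_cong) (simp add: signed_perm_of_abs[OF p])
  then show "inj_on (\<lambda>x. \<bar>signed_perm_of p S x\<bar>) {1..int n}"
    using permutes_inj_on[OF p] by simp
qed

lemma unsigned_part_permutes:
  assumes w: "w \<in> signed_perms n"
  shows "unsigned_part n w permutes {1..int n}"
proof (rule bij_imp_permutes)
  have "inj_on (\<lambda>a. \<bar>w a\<bar>) {1..int n} \<longleftrightarrow> inj_on (unsigned_part n w) {1..int n}"
    by (rule inj_on_cong) (simp add: unsigned_part_def)
  moreover have "unsigned_part n w ` {1..int n} \<subseteq> {1..int n}"
    using signed_perm_abs_mem[OF w] by (auto simp: unsigned_part_def)
  ultimately show "bij_betw (unsigned_part n w) {1..int n} {1..int n}"
    using signed_perm_abs_inj[OF w] endo_inj_surj[of "{1..int n}"] by (simp add: bij_betw_def)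
qed (auto simp: unsigned_part_def)

lemma signed_perm_of_parts:
  assumes w: "w \<in> signed_perms n"
  shows "signed_perm_of (unsigned_part n w) (negatives n w) = w"
proof
  fix x
  have "(if a \<in> negatives n w then - unsigned_part n w a else unsigned_part n w a) = w a"
    if "0 \<le> a" for a
    using that signed_perm_zero[OF w] signed_perm_fixes[OF w, of a]
    by (cases "a = 0") (auto simp: negatives_def unsigned_part_def)
  then show "signed_perm_of (unsigned_part n w) (negatives n w) x = w x"
    using odd_fun_sgn_abs_arg[of w x, OF signed_perm_odd[OF w]] by (simp add: signed_perm_of_def)
qed

lemma unsigned_part_signed_perm_of:
  assumes "p permutes {1..int n}"
  shows "unsigned_part n (signed_perm_of p S) = p"
  using signed_perm_of_abs[OF assms] permutes_not_in[OF assms]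
  by (auto simp: fun_eq_iff unsigned_part_def)

lemma negatives_signed_perm_of:
  assumes "p permutes {1..int n}" "S \<subseteq> {1..int n}"
  shows "negatives n (signed_perm_of p S) = S"
proof -
  have "0 < p a" if "a \<in> {1..int n}" for a using permutes_interval_pos[OF assms(1)] that by simp
  then show ?thesis using assms(2) by (force simp: negatives_def signed_perm_of_def)
qed

lemma bij_betw_signed_perm_of:
  "bij_betw (\<lambda>(p, S). signed_perm_of p S)
     ({p. p permutes {1..int n}} \<times> Pow {1..int n}) (signed_perms n)"
proof (rule bij_betw_byWitness[where f' = "\<lambda>w. (unsigned_part n w, negatives n w)"])
  have "negatives n w \<subseteq> {1..int n}" for w by (auto simp: negatives_def)
  then show "(\<lambda>w. (unsigned_part n w, negatives n w)) ` signed_perms n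
      \<subseteq> {p. p permutes {1..int n}} \<times> Pow {1..int n}"
    by (auto simp: unsigned_part_permutes)
qed (auto simp: unsigned_part_signed_perm_of negatives_signed_perm_of signed_perm_of_parts
      signed_perm_of_mem)

lemma card_signed_perms: "card (signed_perms n) = 2 ^ n * fact n"
proof -
  have "card (signed_perms n) = card ({p. p permutes {1..int n}} \<times> Pow {1..int n})"
    using bij_betw_same_card[OF bij_betw_signed_perm_of] by simp
  also have "\<dots> = fact n * 2 ^ n"
    by (simp add: card_cartesian_product card_permutations card_Pow)
  finally show ?thesis by simp
qed

lemma finite_signed_perms: "finite (signed_perms n)"
  using card_signed_perms[of n] by (intro card_ge_0_finite) simp

lemma card_positive_signed_perms: "card (positive_signed_perms n) = fact n"
proof -
  let ?A = "{p. p permutes {1..int n}} \<times> Pow {1..int n}"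
  have "(\<forall>y>0. 0 < (\<lambda>(p, S). signed_perm_of p S) x y) \<longleftrightarrow> snd x = {}" if xA: "x \<in> ?A" for x
  proof -
    obtain p S where x: "x = (p, S)" and p: "p permutes {1..int n}" and S: "S \<subseteq> {1..int n}"
      using xA by (cases x) auto
    show ?thesis unfolding x
    proof
      assume pos: "\<forall>y>0. 0 < (\<lambda>(p, S). signed_perm_of p S) (p, S) y"
      show "snd (p, S) = {}"
      proof (rule ccontr)
        assume "snd (p, S) \<noteq> {}"
        then obtain a where "a \<in> S" by auto
        then have "0 < a" "signed_perm_of p S a = - p a" using S by (auto simp: signed_perm_of_def)
        then show False using pos permutes_interval_pos[OF p, of a] by force
      qed
    qed (use permutes_interval_pos[OF p] in \<open>simp add: signed_perm_of_def\<close>)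
  qed
  then have "bij_betw (\<lambda>(p, S). signed_perm_of p S) {x \<in> ?A. snd x = {}}
      {w \<in> signed_perms n. \<forall>y>0. 0 < w y}"
    by (rule bij_betw_Collect[OF bij_betw_signed_perm_of])
  moreover have "{x \<in> ?A. snd x = {}} = {p. p permutes {1..int n}} \<times> {{}}"
    by auto
  ultimately have "bij_betw (\<lambda>(p, S). signed_perm_of p S)
      ({p. p permutes {1..int n}} \<times> {{}}) (positive_signed_perms n)"
    unfolding positive_signed_perms_def by simp
  from bij_betw_same_card[OF this] show ?thesis
    by (simp add: card_cartesian_product card_permutations)
qed

section \<open>Gluing and cutting\<close>

definition glue :: "nat \<Rightarrow> (int \<Rightarrow> int) \<Rightarrow> (int \<Rightarrow> int) \<Rightarrow> int \<Rightarrow> int" where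
  "glue i u v x = (if \<bar>x\<bar> \<le> int i then u x else sgn x * (v (\<bar>x\<bar> - int i) + int i))"

definition left_part :: "nat \<Rightarrow> (int \<Rightarrow> int) \<Rightarrow> int \<Rightarrow> int" where
  "left_part i w x = (if \<bar>x\<bar> \<le> int i then w x else x)"

definition right_part :: "nat \<Rightarrow> (int \<Rightarrow> int) \<Rightarrow> int \<Rightarrow> int" where
  "right_part i w y = sgn y * (w (\<bar>y\<bar> + int i) - int i)"

lemma glue_above: "int i < x \<Longrightarrow> glue i u v x = v (x - int i) + int i"
  by (simp add: glue_def)

lemma glue_mem:
  assumes u: "u \<in> signed_perms i" and v: "v \<in> positive_signed_perms m"
  shows "glue i u v \<in> signed_perms (i + m)"
  unfolding signed_perms_iff
proof (intro conjI allI impI ballI inj_onI)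
  have vs: "v \<in> signed_perms m" using v by (simp add: positive_signed_perms_def)
  have low: "\<bar>glue i u v x\<bar> \<in> {1..int i}" if "x \<in> {1..int i}" for x
    using signed_perm_abs_mem[OF u that] that by (simp add: glue_def)
  have high: "glue i u v x \<in> {int i<..int (i + m)}" if "x \<in> {int i<..int (i + m)}" for x
    using positive_signed_perm_mem[OF v, of "x - int i"] that by (auto simp: glue_above)
  fix x
  show "glue i u v (- x) = - glue i u v x"
    using signed_perm_odd[OF u] by (simp add: glue_def)
  show "int (i + m) < \<bar>x\<bar> \<Longrightarrow> glue i u v x = x"
    using signed_perm_fixes[OF vs, of "\<bar>x\<bar> - int i"] by (simp add: glue_def sgn_mult_abs)
  show "x \<in> {1..int (i + m)} \<Longrightarrow> \<bar>glue i u v x\<bar> \<in> {1..int (i + m)}"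
    using low[of x] high[of x] by (cases "x \<le> int i") auto
  fix y assume x: "x \<in> {1..int (i + m)}" and y: "y \<in> {1..int (i + m)}"
    and e: "\<bar>glue i u v x\<bar> = \<bar>glue i u v y\<bar>"
  consider "x \<le> int i" "y \<le> int i" | "int i < x" "int i < y"
    using low[of x] low[of y] high[of x] high[of y] x y e by fastforce
  then show "x = y"
  proof cases
    case 1
    then have "\<bar>u x\<bar> = \<bar>u y\<bar>" using e x y by (simp add: glue_def)
    then show ?thesis by (rule inj_onD[OF signed_perm_abs_inj[OF u]]) (use 1 x y in auto)
  next
    case 2
    then have "glue i u v x = glue i u v y" using high[of x] high[of y] x y e by auto
    then have "v (x - int i) = v (y - int i)" using 2 by (simp add: glue_above)
    then have "x - int i = y - int i"
      by (rule inj_onD[OF positive_signed_perm_inj[OF v]]) (use 2 x y in auto)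
    then show ?thesis by simp
  qed
qed

lemma Cset_imp_gt:
  assumes w: "w \<in> signed_perms n" and c: "int i \<in> Cset n w" and "int i < k"
  shows "int i < w k"
  using c signed_perm_fixes[OF w, of k] assms(3) unfolding Cset_iff[OF w]
  by (cases "k \<le> int n") auto

lemma left_part_mem:
  assumes w: "w \<in> signed_perms n" and c: "int i \<in> Cset n w"
  shows "left_part i w \<in> signed_perms i"
  unfolding signed_perms_iff
proof (intro conjI allI impI ballI)
  have i: "int i < int n" and tail: "\<And>k. int i < k \<Longrightarrow> k \<le> int n \<Longrightarrow> int i < w k"
    using c unfolding Cset_iff[OF w] by auto
  fix x
  show "left_part i w (- x) = - left_part i w x"
    using signed_perm_odd[OF w] by (simp add: left_part_def)
  show "int i < \<bar>x\<bar> \<Longrightarrow> left_part i w x = x"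
    by (simp add: left_part_def)
  show "x \<in> {1..int i} \<Longrightarrow> \<bar>left_part i w x\<bar> \<in> {1..int i}"
    using signed_perm_abs_mem[OF w, of x] signed_perm_abs_le_of_tail[OF w _ i tail, of x] i
    by (auto simp: left_part_def)
  have "inj_on (\<lambda>x. \<bar>w x\<bar>) {1..int i}"
    by (rule inj_on_subset[OF signed_perm_abs_inj[OF w]]) (use i in auto)
  moreover have "inj_on (\<lambda>x. \<bar>w x\<bar>) {1..int i} \<longleftrightarrow> inj_on (\<lambda>x. \<bar>left_part i w x\<bar>) {1..int i}"
    by (rule inj_on_cong) (simp add: left_part_def)
  ultimately show "inj_on (\<lambda>x. \<bar>left_part i w x\<bar>) {1..int i}" by simp
qed

lemma right_part_mem:
  assumes w: "w \<in> signed_perms n" and c: "int i \<in> Cset n w"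
  shows "right_part i w \<in> positive_signed_perms (n - i)"
proof -
  have i: "i < n" using c by (simp add: Cset_iff[OF w])
  have above: "\<And>k. int i < k \<Longrightarrow> int i < w k" using Cset_imp_gt[OF w c] .
  have pos: "right_part i w y = w (y + int i) - int i" if "0 < y" for y
    using that by (simp add: right_part_def)
  have "right_part i w \<in> signed_perms (n - i)"
    unfolding signed_perms_iff
  proof (intro conjI allI impI ballI inj_onI)
    fix y
    show "right_part i w (- y) = - right_part i w y"
      by (simp add: right_part_def)
    show "int (n - i) < \<bar>y\<bar> \<Longrightarrow> right_part i w y = y"
      using signed_perm_fixes[OF w, of "\<bar>y\<bar> + int i"] i by (simp add: right_part_def sgn_mult_abs)
    show "y \<in> {1..int (n - i)} \<Longrightarrow> \<bar>right_part i w y\<bar> \<in> {1..int (n - i)}"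
      using above[of "y + int i"] signed_perm_abs_le[OF w, of "y + int i"] i by (auto simp: pos)
    fix z assume y: "y \<in> {1..int (n - i)}" and z: "z \<in> {1..int (n - i)}"
      and "\<bar>right_part i w y\<bar> = \<bar>right_part i w z\<bar>"
    then have "\<bar>w (y + int i)\<bar> = \<bar>w (z + int i)\<bar>"
      using above[of "y + int i"] above[of "z + int i"] by (simp add: pos)
    then have "y + int i = z + int i"
      by (rule inj_onD[OF signed_perm_abs_inj_nonneg[OF w]]) (use y z i in auto)
    then show "y = z" by simp
  qed
  moreover have "0 < right_part i w y" if "0 < y" for y
    using above[of "y + int i"] that by (simp add: pos)
  ultimately show ?thesis by (simp add: positive_signed_perms_def)
qed

lemma glue_left_right_part:
  assumes w: "w \<in> signed_perms n"
  shows "glue i (left_part i w) (right_part i w) = w"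
proof
  fix x
  show "glue i (left_part i w) (right_part i w) x = w x"
    using odd_fun_sgn_abs_arg[of w x, OF signed_perm_odd[OF w]]
    by (simp add: glue_def left_part_def right_part_def)
qed

lemma left_part_glue: "u \<in> signed_perms i \<Longrightarrow> left_part i (glue i u v) = u"
  using signed_perm_fixes[of u i] by (auto simp: fun_eq_iff left_part_def glue_def)

lemma right_part_glue:
  assumes v: "v \<in> signed_perms m"
  shows "right_part i (glue i u v) = v"
proof
  fix y
  show "right_part i (glue i u v) y = v y"
    using odd_fun_sgn_abs_arg[of v y, OF signed_perm_odd[OF v]] signed_perm_zero[OF v]
    by (cases "y = 0") (simp_all add: right_part_def glue_above)
qed

lemma glue_gt_cut:
  assumes v: "v \<in> positive_signed_perms m" and "int i < k"
  shows "int i < glue i u v k"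
  using assms by (simp add: glue_above positive_signed_perms_def)

lemma Cset_glue_below:
  assumes u: "u \<in> signed_perms i" and v: "v \<in> positive_signed_perms m" and c: "c < int i"
  shows "c \<in> Cset (i + m) (glue i u v) \<longleftrightarrow> c \<in> Cset i u"
proof -
  have "(\<forall>k. c < k \<and> k \<le> int (i + m) \<longrightarrow> c < glue i u v k) \<longleftrightarrow>
      (\<forall>k. c < k \<and> k \<le> int i \<longrightarrow> c < u k)" if "0 \<le> c"
  proof (intro iffI allI impI)
    fix k assume "\<forall>k. c < k \<and> k \<le> int (i + m) \<longrightarrow> c < glue i u v k" "c < k \<and> k \<le> int i"
    then show "c < u k" using that by (auto simp: glue_def)
  next
    fix k assume "\<forall>k. c < k \<and> k \<le> int i \<longrightarrow> c < u k" "c < k \<and> k \<le> int (i + m)"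
    then show "c < glue i u v k"
      using that glue_gt_cut[OF v, where i = i and u = u and k = k] c
      by (cases "k \<le> int i") (auto simp: glue_def)
  qed
  then show ?thesis unfolding Cset_iff[OF glue_mem[OF u v]] Cset_iff[OF u] using c by auto
qed

lemma Cset_glue_above:
  assumes u: "u \<in> signed_perms i" and v: "v \<in> positive_signed_perms m" and c: "int i < c"
  shows "c \<in> Cset (i + m) (glue i u v) \<longleftrightarrow> c - int i \<in> Cset m v"
proof -
  have vs: "v \<in> signed_perms m" using v by (simp add: positive_signed_perms_def)
  have "(\<forall>k. c < k \<and> k \<le> int (i + m) \<longrightarrow> c < glue i u v k) \<longleftrightarrow>
      (\<forall>k. c - int i < k \<and> k \<le> int m \<longrightarrow> c - int i < v k)"
  proof (intro iffI allI impI)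
    fix k assume "\<forall>k. c < k \<and> k \<le> int (i + m) \<longrightarrow> c < glue i u v k" "c - int i < k \<and> k \<le> int m"
    then show "c - int i < v k" using c by (auto simp: glue_above dest: spec[of _ "k + int i"])
  next
    fix k assume "\<forall>k. c - int i < k \<and> k \<le> int m \<longrightarrow> c - int i < v k" "c < k \<and> k \<le> int (i + m)"
    then show "c < glue i u v k" using c by (auto simp: glue_above dest: spec[of _ "k - int i"])
  qed
  then show ?thesis unfolding Cset_iff[OF glue_mem[OF u v]] Cset_iff[OF vs] using c by auto
qed

lemma Cset_glue:
  assumes u: "u \<in> signed_perms i" and v: "v \<in> positive_signed_perms m" and m: "0 < m"
  shows "Cset (i + m) (glue i u v) = Cset i u \<union> {int i} \<union> (\<lambda>c. int i + c) ` (Cset m v - {0})"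
proof (rule set_eqI)
  fix c
  have Cu: "Cset i u \<subseteq> {0..<int i}" and Cv: "Cset m v \<subseteq> {0..}" by (auto simp: Cset_def)
  consider "c < int i" | "c = int i" | "int i < c" by linarith
  then show "c \<in> Cset (i + m) (glue i u v) \<longleftrightarrow>
      c \<in> Cset i u \<union> {int i} \<union> (\<lambda>c. int i + c) ` (Cset m v - {0})"
  proof cases
    case 1
    then show ?thesis using Cset_glue_below[OF u v, of c] Cv by auto
  next
    case 2
    then show ?thesis
      using glue_gt_cut[OF v] m unfolding Cset_iff[OF glue_mem[OF u v]] by auto
  next
    case 3
    then show ?thesis using Cset_glue_above[OF u v, of c] Cu by (force simp: image_iff)
  qed
qed

lemma glue_positive_iff:
  assumes u: "u \<in> signed_perms i" and v: "v \<in> positive_signed_perms m"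
  shows "glue i u v \<in> positive_signed_perms (i + m) \<longleftrightarrow> u \<in> positive_signed_perms i"
proof -
  have "0 < glue i u v x \<longleftrightarrow> 0 < u x" if "0 < x" for x
  proof (cases "x \<le> int i")
    case True
    then show ?thesis using that by (simp add: glue_def)
  next
    case False
    then show ?thesis
      using glue_gt_cut[OF v, where i = i and u = u and k = x] signed_perm_fixes[OF u, of x] that
      by simp
  qed
  then show ?thesis using glue_mem[OF u v] u by (auto simp: positive_signed_perms_def)
qed

lemma finite_indecomposable_perms: "finite (indecomposable_perms m)"
  by (rule finite_subset[OF _ finite_signed_perms[of m]]) (auto simp: indecomposable_perms_def)

lemma glue_indecomposable:
  assumes i: "i < n" and u: "u \<in> signed_perms i" and v: "v \<in> indecomposable_perms (n - i)"
  shows "glue i u v \<in> signed_perms n" and "Cset n (glue i u v) = insert (int i) (Cset i u)"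
proof -
  have n: "i + (n - i) = n" using i by simp
  have vp: "v \<in> positive_signed_perms (n - i)" "0 < n - i"
    using indecomposable_perm_positive[OF v] by auto
  show "glue i u v \<in> signed_perms n" using glue_mem[OF u vp(1)] unfolding n .
  have "Cset (n - i) v = {0}" using v by (simp add: indecomposable_perms_def)
  then show "Cset n (glue i u v) = insert (int i) (Cset i u)"
    using Cset_glue[OF u vp] unfolding n by auto
qed

lemma Max_insert_Cset: "Max (insert (int i) (Cset i u)) = int i"
  using finite_Cset[of i u] by (intro Max_eqI) (auto simp: Cset_def)

lemma decomposition_at_Max_Cset:
  assumes w: "w \<in> signed_perms n" and ne: "Cset n w \<noteq> {}"
  defines "i \<equiv> nat (Max (Cset n w))"
  shows "i < n" and "left_part i w \<in> signed_perms i"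
    and "right_part i w \<in> indecomposable_perms (n - i)"
    and "glue i (left_part i w) (right_part i w) = w"
proof -
  have M: "Max (Cset n w) \<in> Cset n w" using finite_Cset ne by (rule Max_in)
  then have "0 \<le> Max (Cset n w)" unfolding Cset_iff[OF w] by blast
  then have Max: "Max (Cset n w) = int i" by (simp add: i_def)
  with M have c: "int i \<in> Cset n w" by simp
  then show i: "i < n" by (simp add: Cset_iff[OF w])
  show u: "left_part i w \<in> signed_perms i" by (rule left_part_mem[OF w c])
  show g: "glue i (left_part i w) (right_part i w) = w" by (rule glue_left_right_part[OF w])
  have v: "right_part i w \<in> positive_signed_perms (n - i)" by (rule right_part_mem[OF w c])
  have n: "i + (n - i) = n" using i by simp
  have "0 < n - i" using i by simp
  from Cset_glue[OF u v this] have C: "Cset n w = Cset i (left_part i w) \<union> {int i}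
      \<union> (\<lambda>c. int i + c) ` (Cset (n - i) (right_part i w) - {0})"
    unfolding n g .
  have "d = 0" if d: "d \<in> Cset (n - i) (right_part i w)" for d
  proof (rule ccontr)
    assume "d \<noteq> 0"
    then have "int i + d \<in> Cset n w" using C d by blast
    then have "int i + d \<le> Max (Cset n w)" by (rule Max_ge[OF finite_Cset])
    moreover have "0 \<le> d" using d by (simp add: Cset_def)
    ultimately show False using \<open>d \<noteq> 0\<close> Max by simp
  qed
  moreover have "0 \<in> Cset (n - i) (right_part i w)"
    using zero_in_Cset_iff[of "right_part i w" "n - i"] v i by (simp add: positive_signed_perms_def)
  ultimately show "right_part i w \<in> indecomposable_perms (n - i)"
    using v by (auto simp: indecomposable_perms_def positive_signed_perms_def)
qed

definition decompose :: "nat \<Rightarrow> (int \<Rightarrow> int) \<Rightarrow> nat \<times> (int \<Rightarrow> int) \<times> (int \<Rightarrow> int)" where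
  "decompose n w = (let i = nat (Max (Cset n w)) in (i, left_part i w, right_part i w))"

lemma decompose_glue:
  assumes "i < n" "u \<in> signed_perms i" "v \<in> indecomposable_perms (n - i)"
  shows "decompose n (glue i u v) = (i, u, v)"
  using glue_indecomposable(2)[OF assms] Max_insert_Cset left_part_glue[OF assms(2)]
    right_part_glue[of v "n - i"] assms(3)
  by (simp add: decompose_def indecomposable_perms_def)

lemma decompose_mem:
  assumes "w \<in> signed_perms n" "Cset n w \<noteq> {}"
  shows "decompose n w \<in> (SIGMA i:{..<n}. signed_perms i \<times> indecomposable_perms (n - i))"
    and "(\<lambda>(i, u, v). glue i u v) (decompose n w) = w"
  using decomposition_at_Max_Cset[OF assms] by (simp_all add: decompose_def Let_def)

lemma bij_betw_glue:
  "bij_betw (\<lambda>(i, u, v). glue i u v)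
     (SIGMA i:{..<n}. signed_perms i \<times> indecomposable_perms (n - i))
     {w \<in> signed_perms n. Cset n w \<noteq> {}}"
proof (rule bij_betw_byWitness[where f' = "decompose n"])
  show "decompose n ` {w \<in> signed_perms n. Cset n w \<noteq> {}}
      \<subseteq> (SIGMA i:{..<n}. signed_perms i \<times> indecomposable_perms (n - i))"
    using decompose_mem(1) by blast
qed (auto simp: decompose_glue decompose_mem(2) glue_indecomposable)

lemma card_Cset_nonempty_filter:
  assumes PQ: "\<And>i u v. i < n \<Longrightarrow> u \<in> signed_perms i \<Longrightarrow> v \<in> indecomposable_perms (n - i) \<Longrightarrow>
      P (glue i u v) \<longleftrightarrow> Q i u"
  shows "card {w \<in> signed_perms n. Cset n w \<noteq> {} \<and> P w}
    = (\<Sum>i<n. card {u \<in> signed_perms i. Q i u} * card (indecomposable_perms (n - i)))"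
proof -
  let ?A = "SIGMA i:{..<n}. signed_perms i \<times> indecomposable_perms (n - i)"
  have "bij_betw (\<lambda>(i, u, v). glue i u v) {a \<in> ?A. Q (fst a) (fst (snd a))}
      {w \<in> {w \<in> signed_perms n. Cset n w \<noteq> {}}. P w}"
    by (rule bij_betw_Collect[OF bij_betw_glue]) (auto simp: PQ)
  from bij_betw_same_card[OF this]
  have "card {w \<in> signed_perms n. Cset n w \<noteq> {} \<and> P w} = card {a \<in> ?A. Q (fst a) (fst (snd a))}"
    by (simp add: conj_assoc)
  also have "{a \<in> ?A. Q (fst a) (fst (snd a))}
      = (SIGMA i:{..<n}. {u \<in> signed_perms i. Q i u} \<times> indecomposable_perms (n - i))"
    by auto
  also have "card \<dots> = (\<Sum>i<n. card {u \<in> signed_perms i. Q i u} * card (indecomposable_perms (n - i)))"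
    using finite_signed_perms finite_indecomposable_perms by (simp add: card_cartesian_product)
  finally show ?thesis .
qed

lemma card_signed_perms_rec:
  "card (signed_perms n)
    = card (Bnk n 0) + (\<Sum>i<n. card (signed_perms i) * card (indecomposable_perms (n - i)))"
proof -
  let ?N = "{w \<in> signed_perms n. Cset n w \<noteq> {} \<and> True}"
  have "signed_perms n = Bnk n 0 \<union> ?N" and disj: "Bnk n 0 \<inter> ?N = {}"
    using finite_Cset by (auto simp: Bnk_def)
  then have "card (signed_perms n) = card (Bnk n 0 \<union> ?N)" by simp
  also have "\<dots> = card (Bnk n 0) + card ?N"
    by (rule card_Un_disjoint[OF _ _ disj];
        rule finite_subset[OF _ finite_signed_perms[of n]]) (auto simp: Bnk_def)
  also have "card ?N = (\<Sum>i<n. card {u \<in> signed_perms i. True} * card (indecomposable_perms (n - i)))"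
    by (rule card_Cset_nonempty_filter) simp
  finally show ?thesis by simp
qed

lemma card_Bnk_Suc:
  "card (Bnk n (Suc k)) = (\<Sum>i<n. card (Bnk i k) * card (indecomposable_perms (n - i)))"
proof -
  have "card (Cset n (glue i u v)) = Suc k \<longleftrightarrow> card (Cset i u) = k"
    if "i < n" "u \<in> signed_perms i" "v \<in> indecomposable_perms (n - i)" for i u v
  proof -
    have "int i \<notin> Cset i u" by (simp add: Cset_def)
    then show ?thesis using glue_indecomposable(2)[OF that] finite_Cset by simp
  qed
  then have "card {w \<in> signed_perms n. Cset n w \<noteq> {} \<and> card (Cset n w) = Suc k}
      = (\<Sum>i<n. card (Bnk i k) * card (indecomposable_perms (n - i)))"
    unfolding Bnk_def by (rule card_Cset_nonempty_filter)
  moreover have "{w \<in> signed_perms n. Cset n w \<noteq> {} \<and> card (Cset n w) = Suc k} = Bnk n (Suc k)"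
    by (auto simp: Bnk_def)
  ultimately show ?thesis by simp
qed

lemma card_positive_signed_perms_rec:
  assumes "0 < n"
  shows "card (positive_signed_perms n)
    = (\<Sum>i<n. card (positive_signed_perms i) * card (indecomposable_perms (n - i)))"
proof -
  have "glue i u v \<in> positive_signed_perms n \<longleftrightarrow> u \<in> positive_signed_perms i"
    if "i < n" "u \<in> signed_perms i" "v \<in> indecomposable_perms (n - i)" for i u v
  proof -
    have "i + (n - i) = n" using that(1) by simp
    then show ?thesis
      using glue_positive_iff[OF that(2)] indecomposable_perm_positive[OF that(3)] by metis
  qed
  then have "card {w \<in> signed_perms n. Cset n w \<noteq> {} \<and> w \<in> positive_signed_perms n}
      = (\<Sum>i<n. card {u \<in> signed_perms i. u \<in> positive_signed_perms i}
          * card (indecomposable_perms (n - i)))"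
    by (rule card_Cset_nonempty_filter)
  moreover have "{w \<in> signed_perms m. Cset m w \<noteq> {} \<and> w \<in> positive_signed_perms m}
      = positive_signed_perms m" if "0 < m" for m
    using zero_in_Cset_iff[of _ m] that by (auto simp: positive_signed_perms_def)
  moreover have "{u \<in> signed_perms i. u \<in> positive_signed_perms i} = positive_signed_perms i" for i
    by (auto simp: positive_signed_perms_def)
  ultimately show ?thesis using assms by simp
qed

section \<open>Generating functions\<close>

definition indecomposable_gf :: "rat fps" where
  "indecomposable_gf = Abs_fps (\<lambda>m. of_nat (card (indecomposable_perms m)))"

lemma Abs_fps_convolution_rec:
  fixes a b c :: "nat \<Rightarrow> nat"
  assumes "\<And>n. a n = b n + (\<Sum>i<n. c i * card (indecomposable_perms (n - i)))"
  shows "Abs_fps (\<lambda>n. of_nat (a n))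
    = Abs_fps (\<lambda>n. of_nat (b n)) + Abs_fps (\<lambda>n. of_nat (c n)) * indecomposable_gf"
proof (rule fps_ext)
  fix n :: nat
  have "{0..n} = insert n {..<n}" by auto
  then show "fps_nth (Abs_fps (\<lambda>n. of_nat (a n))) n
      = fps_nth (Abs_fps (\<lambda>n. of_nat (b n)) + Abs_fps (\<lambda>n. of_nat (c n)) * indecomposable_gf) n"
    using assms[of n] by (simp add: fps_mult_nth indecomposable_gf_def indecomposable_perms_0)
qed

lemma fA_eq_indecomposable_gf: "fA = indecomposable_gf"
proof -
  let ?F = "Abs_fps (\<lambda>n. fact n) :: rat fps"
  have rec: "fact n = of_bool (n = 0) + (\<Sum>i<n. fact i * card (indecomposable_perms (n - i)))" for n
    using card_positive_signed_perms_rec[of n]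
    by (cases "n = 0") (simp_all add: card_positive_signed_perms)
  have "Abs_fps (\<lambda>n. of_nat (of_bool (n = 0))) = (1 :: rat fps)"
    by (rule fps_ext) simp
  with Abs_fps_convolution_rec[OF rec] have "?F = 1 + ?F * indecomposable_gf"
    by simp
  then have "?F - ?F * indecomposable_gf = 1" by (rule diff_eq_eq[THEN iffD2])
  then have "?F * (1 - indecomposable_gf) = 1" by (simp add: algebra_simps)
  then have "inverse ?F = 1 - indecomposable_gf" by (rule fps_inverse_unique)
  then show ?thesis by (simp add: fA_def)
qed

definition Bnk_gf :: "nat \<Rightarrow> rat fps" where
  "Bnk_gf k = Abs_fps (\<lambda>n. of_nat (card (Bnk n k)))"

lemma fB_eq_Bnk_gf_0: "fB = Bnk_gf 0"
proof -
  let ?B = "Abs_fps (\<lambda>n. 2 ^ n * fact n) :: rat fps"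
  have "?B = Bnk_gf 0 + ?B * indecomposable_gf"
    using Abs_fps_convolution_rec[OF card_signed_perms_rec]
    by (simp add: card_signed_perms Bnk_gf_def)
  then have "?B - ?B * indecomposable_gf = Bnk_gf 0" by (rule diff_eq_eq[THEN iffD2])
  then have "Bnk_gf 0 = ?B * (1 - fA)" by (simp add: fA_eq_indecomposable_gf algebra_simps)
  then show ?thesis by (simp add: fB_def fA_def)
qed

lemma Bnk_gf_eq: "Bnk_gf k = fB * fA ^ k"
proof (induction k)
  case 0
  then show ?case by (simp add: fB_eq_Bnk_gf_0)
next
  case (Suc k)
  have "Bnk_gf (Suc k) = Bnk_gf k * indecomposable_gf"
  proof -
    have "card (Bnk n (Suc k)) = 0 + (\<Sum>i<n. card (Bnk i k) * card (indecomposable_perms (n - i)))"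
      for n using card_Bnk_Suc by simp
    from Abs_fps_convolution_rec[OF this] show ?thesis by (simp add: Bnk_gf_def flip: fps_zero_def)
  qed
  then show ?case using Suc by (simp add: fA_eq_indecomposable_gf algebra_simps)
qed

lemma fps_inverse_one_minus_X_mult_const:
  fixes c :: "'a :: {ring_1, inverse}"
  assumes "inverse (1 :: 'a) = 1"
  shows "inverse (1 - fps_X * fps_const c) = Abs_fps (\<lambda>k. c ^ k)"
proof -
  let ?f = "1 - fps_X * fps_const c" and ?g = "Abs_fps (\<lambda>k. c ^ k)"
  have "?f * ?g = 1"
  proof (rule fps_ext)
    fix n
    show "fps_nth (?f * ?g) n = fps_nth 1 n"
      by (cases n) (simp_all add: algebra_simps fps_X_mult_nth)
  qed
  then have "fps_right_inverse ?f (fps_nth ?g 0) = ?g"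
    by (intro fps_lr_inverse_unique_ring1(2)) simp_all
  then show ?thesis using assms by (simp add: fps_inverse_def)
qed

theorem mainTheorem15:
  shows "fB = Abs_fps (\<lambda>n. of_nat (card (Bnk n 0)))
     \<and> (\<forall>n k. fps_nth (fps_nth GF k) n = of_nat (card (Bnk n k)))"
proof
  show "fB = Abs_fps (\<lambda>n. of_nat (card (Bnk n 0)))"
    using fB_eq_Bnk_gf_0 by (simp add: Bnk_gf_def)
  have "fps_nth GF k = Bnk_gf k" for k
    by (simp add: GF_def fps_inverse_one_minus_X_mult_const Bnk_gf_eq)
  then show "\<forall>n k. fps_nth (fps_nth GF k) n = of_nat (card (Bnk n k))"
    by (simp add: Bnk_gf_def)
qed

end
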